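(* Let $A\in\mathbb{R}^{m\times n}$ have no zero row, with rows $a_1^T,\dots,a_m^T$, and let ${\bf u}=(\mu_1,\dots,\mu_m)\in\mathbb{R}^m$. Let $P_k(\mu_k)=I-\mu_k a_ka_k^T/\|a_k\|_2^2$, $Q_j({\bf u}_j)=P_m(\mu_m)\cdots P_{j+1}(\mu_{j+1})$ for $1\le j\le m-1$, $Q_m({\bf u}_m)=I$, and $$A_{\mathcal S}({\bf u})=\big(Q_1({\bf u}_1)a_1,\dots,Q_m({\bf u}_m)a_m\big)^T\in\mathbb{R}^{m\times n}.$$ Then there exists a unit upper triangular matrix $C({\bf u})\in\mathbb{R}^{m\times m}$ such that $A_{\mathcal S}({\bf u})=C({\bf u})A$.
   Context: ${\bf u}_j=(\mu_{j+1},\dots,\mu_m)$. A unit upper triangular matrix is an upper triangular matrix with all diagonal entries equal to $1$. *)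

theory Defs
  imports "Jordan_Normal_Form.Matrix"
begin

text \<open>Rows and indices are 0-based: row k of A (k < m) is a_(k+1) of the paper.\<close>

definition proj_P :: "real mat \<Rightarrow> real vec \<Rightarrow> nat \<Rightarrow> real mat" where
  "proj_P A u k = 1\<^sub>m (dim_col A) -
     (u $ k / (row A k \<bullet> row A k)) \<cdot>\<^sub>m
       mat (dim_col A) (dim_col A) (\<lambda>(i, j). row A k $ i * row A k $ j)"

text \<open>Q A u j = P_(m-1) * ... * P_(j+1) (0-based), identity when j = m-1.\<close>
definition prod_Q :: "real mat \<Rightarrow> real vec \<Rightarrow> nat \<Rightarrow> real mat" where
  "prod_Q A u j = foldl (\<lambda>M k. proj_P A u k * M) (1\<^sub>m (dim_col A)) [Suc j..<dim_row A]"

definition A_S :: "real mat \<Rightarrow> real vec \<Rightarrow> real mat" where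
  "A_S A u = mat (dim_row A) (dim_col A) (\<lambda>(i, l). (prod_Q A u i *\<^sub>v row A i) $ l)"

definition unit_upper_triangular :: "real mat \<Rightarrow> bool" where
  "unit_upper_triangular C \<longleftrightarrow> upper_triangular C \<and> (\<forall>i < dim_row C. C $$ (i, i) = 1)"

end

theory Submission
  imports Defs
begin

text \<open>Each P_k moves a vector only along a_k: P_k y = y - t a_k. Hence Q_j a_j differs from
  a_j by a linear combination of the later rows a_(j+1), ..., a_m, and collecting these
  coefficients row by row gives a unit upper triangular C with A_S = C A.\<close>

lemma proj_P_carrier: "proj_P A u k \<in> carrier_mat (dim_col A) (dim_col A)"
  unfolding proj_P_def by auto

lemma proj_P_mult_vec:
  assumes "y \<in> carrier_vec (dim_col A)"
  shows "proj_P A u k *\<^sub>v y =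
    y - (u $ k / (row A k \<bullet> row A k) * (row A k \<bullet> y)) \<cdot>\<^sub>v row A k"
proof
  let ?r = "row A k" and ?s = "u $ k / (row A k \<bullet> row A k)"
  fix l assume l: "l < dim_vec (y - (?s * (?r \<bullet> y)) \<cdot>\<^sub>v ?r)"
  then have l: "l < dim_col A" by simp
  have "(proj_P A u k *\<^sub>v y) $ l =
      (\<Sum>j<dim_col A. (of_bool (l = j) - ?s * (?r $ l * ?r $ j)) * y $ j)"
    using l assms unfolding proj_P_def
    by (simp add: scalar_prod_def lessThan_atLeast0 row_def of_bool_def)
  also have "\<dots> = (\<Sum>j<dim_col A. of_bool (l = j) * y $ j) -
      ?s * ?r $ l * (\<Sum>j<dim_col A. ?r $ j * y $ j)"
    by (simp add: left_diff_distrib sum_subtractf sum_distrib_left mult.assoc)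
  also have "(\<Sum>j<dim_col A. of_bool (l = j) * y $ j) = y $ l"
  proof -
    have "{..<dim_col A} \<inter> {j. l = j} = {l}" using l by auto
    then show ?thesis by simp
  qed
  also have "(\<Sum>j<dim_col A. ?r $ j * y $ j) = ?r \<bullet> y"
    using assms by (simp add: scalar_prod_def lessThan_atLeast0)
  finally show "(proj_P A u k *\<^sub>v y) $ l = (y - (?s * (?r \<bullet> y)) \<cdot>\<^sub>v ?r) $ l"
    using l assms by simp
qed (simp add: proj_P_def)

lemma sum_coeff_minus_insert:
  fixes c :: "'a \<Rightarrow> 'b :: comm_ring"
  assumes "finite K"
  shows "(\<Sum>j\<in>K. c j * f j) - t * f k =
    (\<Sum>j\<in>insert k K. (c(k := (if k \<in> K then c k else 0) - t)) j * f j)"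
proof -
  let ?c = "c(k := (if k \<in> K then c k else 0) - t)"
  have "(\<Sum>j\<in>K - {k}. ?c j * f j) = (\<Sum>j\<in>K - {k}. c j * f j)"
    by (rule sum.cong) auto
  then show ?thesis
    using assms by (simp add: sum.insert_remove sum_diff1 algebra_simps)
qed

lemma foldl_proj_P_carrier:
  "foldl (\<lambda>M k. proj_P A u k * M) (1\<^sub>m (dim_col A)) ks \<in> carrier_mat (dim_col A) (dim_col A)"
  by (induction ks rule: rev_induct) (auto intro!: mult_carrier_mat proj_P_carrier)

lemma foldl_proj_P_mult_vec:
  assumes x: "x \<in> carrier_vec (dim_col A)"
  shows "\<exists>c. \<forall>l < dim_col A.
    (foldl (\<lambda>M k. proj_P A u k * M) (1\<^sub>m (dim_col A)) ks *\<^sub>v x) $ l =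
      x $ l + (\<Sum>k\<in>set ks. c k * A $$ (k, l))"
proof (induction ks rule: rev_induct)
  case Nil
  show ?case using x by simp
next
  case (snoc k ks)
  let ?G = "foldl (\<lambda>M k. proj_P A u k * M) (1\<^sub>m (dim_col A)) ks"
  obtain c where c:
    "\<forall>l < dim_col A. (?G *\<^sub>v x) $ l = x $ l + (\<Sum>k\<in>set ks. c k * A $$ (k, l))"
    using snoc.IH by blast
  have G: "?G \<in> carrier_mat (dim_col A) (dim_col A)"
    by (rule foldl_proj_P_carrier)
  define t where "t = u $ k / (row A k \<bullet> row A k) * (row A k \<bullet> (?G *\<^sub>v x))"
  let ?c = "c(k := (if k \<in> set ks then c k else 0) - t)"
  have "(foldl (\<lambda>M k. proj_P A u k * M) (1\<^sub>m (dim_col A)) (ks @ [k]) *\<^sub>v x) $ l =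
      x $ l + (\<Sum>j\<in>set (ks @ [k]). ?c j * A $$ (j, l))"
    if l: "l < dim_col A" for l
  proof -
    have "(foldl (\<lambda>M k. proj_P A u k * M) (1\<^sub>m (dim_col A)) (ks @ [k]) *\<^sub>v x) $ l =
        (proj_P A u k *\<^sub>v (?G *\<^sub>v x)) $ l"
      using assoc_mult_mat_vec[OF proj_P_carrier G x] by simp
    also have "\<dots> = x $ l + (\<Sum>j\<in>set ks. c j * A $$ (j, l)) - t * A $$ (k, l)"
      using G x l c by (simp add: proj_P_mult_vec t_def row_def)
    also have "\<dots> = x $ l + (\<Sum>j\<in>insert k (set ks). ?c j * A $$ (j, l))"
      by (simp only: add_diff_eq[symmetric]
          sum_coeff_minus_insert[OF finite_set, where f = "\<lambda>j. A $$ (j, l)"])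
    finally show ?thesis by simp
  qed
  then show ?case by blast
qed

lemma ex_unit_upper_triangular_factor:
  assumes A: "A \<in> carrier_mat m n" and B: "B \<in> carrier_mat m n"
    and rows: "\<And>i l. i < m \<Longrightarrow> l < n \<Longrightarrow>
      B $$ (i, l) = A $$ (i, l) + (\<Sum>k\<in>{Suc i..<m}. c i k * A $$ (k, l))"
  shows "\<exists>C \<in> carrier_mat m m. unit_upper_triangular C \<and> B = C * A"
proof (intro bexI conjI)
  define C where "C = mat m m (\<lambda>(i, k). if k = i then 1 else if i < k then c i k else 0)"
  show C: "C \<in> carrier_mat m m" unfolding C_def by simp
  show "unit_upper_triangular C"
    unfolding unit_upper_triangular_def upper_triangular_def C_def by simp
  show "B = C * A"
  proof (rule eq_matI)
    fix i l assume "i < dim_row (C * A)" and "l < dim_col (C * A)"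
    then have i: "i < m" and l: "l < n" using A C by auto
    have "(C * A) $$ (i, l) = (\<Sum>k\<in>{0..<m}. C $$ (i, k) * A $$ (k, l))"
      using A C i l by (simp add: scalar_prod_def)
    also have "\<dots> = (\<Sum>k\<in>{0..<m}. of_bool (k = i) * A $$ (k, l) +
        of_bool (i < k) * (c i k * A $$ (k, l)))"
      by (rule sum.cong) (auto simp: C_def i)
    also have "\<dots> = A $$ (i, l) + (\<Sum>k\<in>{Suc i..<m}. c i k * A $$ (k, l))"
    proof -
      have "{0..<m} \<inter> {k. k = i} = {i}" "{0..<m} \<inter> {k. i < k} = {Suc i..<m}"
        using i by auto
      then show ?thesis by (simp add: sum.distrib)
    qed
    finally show "B $$ (i, l) = (C * A) $$ (i, l)" using rows[OF i l] by simp
  qed (use A B C in auto)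
qed

theorem theorem3p5:
  fixes A :: "real mat" and u :: "real vec" and m n :: nat
  assumes "A \<in> carrier_mat m n"
    and "\<forall>k < m. row A k \<noteq> 0\<^sub>v n"
    and "dim_vec u = m"
  shows "\<exists>C \<in> carrier_mat m m. unit_upper_triangular C \<and> A_S A u = C * A"
proof -
  have A: "dim_row A = m" "dim_col A = n" using assms(1) by auto
  have "\<exists>c. \<forall>l < n.
      A_S A u $$ (i, l) = A $$ (i, l) + (\<Sum>k\<in>{Suc i..<m}. c k * A $$ (k, l))"
    if i: "i < m" for i
  proof -
    have "row A i \<in> carrier_vec (dim_col A)" by simp
    from foldl_proj_P_mult_vec[OF this, of u "[Suc i..<m]"] obtain c where
      "\<forall>l < n. (prod_Q A u i *\<^sub>v row A i) $ l =
        row A i $ l + (\<Sum>k\<in>{Suc i..<m}. c k * A $$ (k, l))"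
      unfolding prod_Q_def A by auto
    then show ?thesis using i by (auto simp: A_S_def A)
  qed
  then obtain c where "\<And>i l. i < m \<Longrightarrow> l < n \<Longrightarrow>
      A_S A u $$ (i, l) = A $$ (i, l) + (\<Sum>k\<in>{Suc i..<m}. c i k * A $$ (k, l))"
    by metis
  moreover have "A_S A u \<in> carrier_mat m n" unfolding A_S_def A by simp
  ultimately show ?thesis using ex_unit_upper_triangular_factor[OF assms(1)] by blast
qed

end
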